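(* Consider the control system, with state $(J_1,J_3,K_2,Q_2,J_0,Q_1,K_1,Q_3,K_3,J_2)\in\mathbb{R}^{10}$ and scalar control $g(t)$, \[ \begin{aligned} \dot J_1&=2gJ_3,\quad \dot J_3=-2gJ_1+2gK_2,\quad \dot K_2=2gJ_3+2Q_2,\quad \dot Q_2=-2K_2,\\ \dot J_0&=-2gQ_1,\quad \dot Q_1=-2gJ_0-2K_1+2gQ_3,\quad \dot K_1=2Q_1+2gK_3,\\ \dot Q_3&=-2gQ_1-2K_3,\quad \dot K_3=-2gK_1+2Q_3-2gJ_2,\quad \dot J_2=-2gK_3, \end{aligned} \] with initial state $(J_1,J_3,K_2,Q_2)=(-1,0,0,0)$, $(J_0,Q_1,K_1,Q_3,K_3,J_2)=(1,0,0,0,0,0)$ and target state $(J_1,J_3,K_2,Q_2)=(1,0,0,0)$, $(J_0,Q_1,K_1,Q_3,K_3,J_2)=(1,0,0,0,0,0)$. Let $m\in\{3,5,7,\ldots\}$ be an odd integer and let the control bound $G_0$ satisfy \[ \frac{m}{m^2+1}\le G_0<\frac{m-2}{(m-2)^2+1}. \] Then the minimum time $T>0$ at which the target state can be reached from the initial state using a constant control $g(t)\equiv G$ with $0<G\le G_0$ is \[ T=\frac{\pi}{2}\sqrt{m^2+1}, \] attained with the constant control $G=m/(m^2+1)$.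
   Context: Here $g(t)$ is the photon–phonon coupling rate (in units of the mechanical frequency) of a cavity optomechanical system, and the target corresponds to swapping photon and phonon populations. *)

theory Defs
  imports "HOL-Analysis.Analysis"
begin

text \<open>The state is written as ten real-valued functions of time.
  reach G T: the solution starting at the initial state at time 0 is at
  the target state at time T (the solution of the linear ODE is unique,
  so existence of such a solution is the same as reachability).\<close>

definition reach :: "real \<Rightarrow> real \<Rightarrow> bool" where
  "reach G T \<longleftrightarrow>
    (\<exists>J1 J3 K2 Q2 J0 Q1 K1 Q3 K3 J2 :: real \<Rightarrow> real.
      (\<forall>t\<in>{0..T}.
        (J1 has_real_derivative (2*G*J3 t)) (at t within {0..T}) \<and>
        (J3 has_real_derivative (-2*G*J1 t + 2*G*K2 t)) (at t within {0..T}) \<and>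
        (K2 has_real_derivative (2*G*J3 t + 2*Q2 t)) (at t within {0..T}) \<and>
        (Q2 has_real_derivative (-2*K2 t)) (at t within {0..T}) \<and>
        (J0 has_real_derivative (-2*G*Q1 t)) (at t within {0..T}) \<and>
        (Q1 has_real_derivative (-2*G*J0 t - 2*K1 t + 2*G*Q3 t)) (at t within {0..T}) \<and>
        (K1 has_real_derivative (2*Q1 t + 2*G*K3 t)) (at t within {0..T}) \<and>
        (Q3 has_real_derivative (-2*G*Q1 t - 2*K3 t)) (at t within {0..T}) \<and>
        (K3 has_real_derivative (-2*G*K1 t + 2*Q3 t - 2*G*J2 t)) (at t within {0..T}) \<and>
        (J2 has_real_derivative (-2*G*K3 t)) (at t within {0..T})) \<and>
      J1 0 = -1 \<and> J3 0 = 0 \<and> K2 0 = 0 \<and> Q2 0 = 0 \<and>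
      J0 0 = 1 \<and> Q1 0 = 0 \<and> K1 0 = 0 \<and> Q3 0 = 0 \<and> K3 0 = 0 \<and> J2 0 = 0 \<and>
      J1 T = 1 \<and> J3 T = 0 \<and> K2 T = 0 \<and> Q2 T = 0 \<and>
      J0 T = 1 \<and> Q1 T = 0 \<and> K1 T = 0 \<and> Q3 T = 0 \<and> K3 T = 0 \<and> J2 T = 0)"

end

theory Submission
  imports Defs
begin

text \<open>The system decouples into the block (J1, J3, K2, Q2), which has to flip J1 from -1 to 1,
  and the block (J0, Q1, K1, Q3, K3, J2), which has to return to its initial state.
  Write G = x y / 4 with x^2 + y^2 = 4 and 0 < y < x. The first block has normal
  frequencies x and y, and for each of them a first integral; comparing its values at 0 and T
  shows that the flip forces cos (x T) = cos (y T) = -1. Conversely the explicit normal mode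
  solution flips exactly at such T, and then the second block, whose frequencies are x \<plusminus> y,
  returns automatically. So x T = p \<pi> and y T = q \<pi> with odd p > q > 0, which gives
  G = p q / (p^2 + q^2) and T = \<pi>/2 \<surd>(p^2 + q^2).
  The upper bound on G forces p > (m - 2) q, hence p \<ge> m, so T \<ge> \<pi>/2 \<surd>(m^2 + 1),
  with equality for p = m and q = 1.\<close>

definition flip_ode ::
    "real \<Rightarrow> real set \<Rightarrow> (real \<Rightarrow> real) \<Rightarrow> (real \<Rightarrow> real) \<Rightarrow> (real \<Rightarrow> real) \<Rightarrow>
      (real \<Rightarrow> real) \<Rightarrow> bool"
  where "flip_ode G S J1 J3 K2 Q2 \<longleftrightarrow> (\<forall>t\<in>S.
    (J1 has_real_derivative (2*G*J3 t)) (at t within S) \<and>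
    (J3 has_real_derivative (-2*G*J1 t + 2*G*K2 t)) (at t within S) \<and>
    (K2 has_real_derivative (2*G*J3 t + 2*Q2 t)) (at t within S) \<and>
    (Q2 has_real_derivative (-2*K2 t)) (at t within S))"

definition return_ode ::
    "real \<Rightarrow> real set \<Rightarrow> (real \<Rightarrow> real) \<Rightarrow> (real \<Rightarrow> real) \<Rightarrow> (real \<Rightarrow> real) \<Rightarrow>
      (real \<Rightarrow> real) \<Rightarrow> (real \<Rightarrow> real) \<Rightarrow> (real \<Rightarrow> real) \<Rightarrow> bool"
  where "return_ode G S J0 Q1 K1 Q3 K3 J2 \<longleftrightarrow> (\<forall>t\<in>S.
    (J0 has_real_derivative (-2*G*Q1 t)) (at t within S) \<and>
    (Q1 has_real_derivative (-2*G*J0 t - 2*K1 t + 2*G*Q3 t)) (at t within S) \<and>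
    (K1 has_real_derivative (2*Q1 t + 2*G*K3 t)) (at t within S) \<and>
    (Q3 has_real_derivative (-2*G*Q1 t - 2*K3 t)) (at t within S) \<and>
    (K3 has_real_derivative (-2*G*K1 t + 2*Q3 t - 2*G*J2 t)) (at t within S) \<and>
    (J2 has_real_derivative (-2*G*K3 t)) (at t within S))"

definition flip_reachable :: "real \<Rightarrow> real \<Rightarrow> bool" where
  "flip_reachable G T \<longleftrightarrow> (\<exists>J1 J3 K2 Q2. flip_ode G {0..T} J1 J3 K2 Q2 \<and>
     J1 0 = -1 \<and> J3 0 = 0 \<and> K2 0 = 0 \<and> Q2 0 = 0 \<and>
     J1 T = 1 \<and> J3 T = 0 \<and> K2 T = 0 \<and> Q2 T = 0)"

definition return_reachable :: "real \<Rightarrow> real \<Rightarrow> bool" where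
  "return_reachable G T \<longleftrightarrow> (\<exists>J0 Q1 K1 Q3 K3 J2. return_ode G {0..T} J0 Q1 K1 Q3 K3 J2 \<and>
     J0 0 = 1 \<and> Q1 0 = 0 \<and> K1 0 = 0 \<and> Q3 0 = 0 \<and> K3 0 = 0 \<and> J2 0 = 0 \<and>
     J0 T = 1 \<and> Q1 T = 0 \<and> K1 T = 0 \<and> Q3 T = 0 \<and> K3 T = 0 \<and> J2 T = 0)"

lemma reach_iff_flip_and_return:
  "reach G T \<longleftrightarrow> flip_reachable G T \<and> return_reachable G T"
  unfolding reach_def flip_reachable_def return_reachable_def flip_ode_def return_ode_def
  by blast

lemma flip_ode_subset:
  "flip_ode G S J1 J3 K2 Q2 \<Longrightarrow> S' \<subseteq> S \<Longrightarrow> flip_ode G S' J1 J3 K2 Q2"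
  unfolding flip_ode_def by (meson has_field_derivative_subset subsetD)

lemma return_ode_subset:
  "return_ode G S J0 Q1 K1 Q3 K3 J2 \<Longrightarrow> S' \<subseteq> S \<Longrightarrow> return_ode G S' J0 Q1 K1 Q3 K3 J2"
  unfolding return_ode_def by (meson has_field_derivative_subset subsetD)

lemma flip_ode_first_integral:
  fixes x y T :: real
  assumes xy: "x\<^sup>2 + y\<^sup>2 = 4" and "0 \<le> T" and ode: "flip_ode (x*y/4) {0..T} J1 J3 K2 Q2"
  shows "cos (x*T) * (y\<^sup>2 * J1 T + x\<^sup>2 * K2 T) - sin (x*T) * (2*y * J3 T + 2*x * Q2 T)
       = y\<^sup>2 * J1 0 + x\<^sup>2 * K2 0"
proof -
  define P where
    "P t = cos (x*t) * (y\<^sup>2 * J1 t + x\<^sup>2 * K2 t) - sin (x*t) * (2*y * J3 t + 2*x * Q2 t)" for t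
  have "(P has_real_derivative 0) (at t within {0..T})" if t: "t \<in> {0..T}" for t
  proof -
    from ode t have d: "(J1 has_real_derivative (2*(x*y/4)*J3 t)) (at t within {0..T})"
        "(J3 has_real_derivative (-2*(x*y/4)*J1 t + 2*(x*y/4)*K2 t)) (at t within {0..T})"
        "(K2 has_real_derivative (2*(x*y/4)*J3 t + 2*Q2 t)) (at t within {0..T})"
        "(Q2 has_real_derivative (-2*K2 t)) (at t within {0..T})"
      unfolding flip_ode_def by blast+
    have "(P has_real_derivative
        x*y/2 * (x\<^sup>2 + y\<^sup>2 - 4) * cos (x*t) * J3 t - x * (x\<^sup>2 + y\<^sup>2 - 4) * sin (x*t) * K2 t)
        (at t within {0..T})"
      unfolding P_def
      by (rule derivative_eq_intros d refl | simp)+ (simp add: field_simps power2_eq_square)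
    then show ?thesis using xy by simp
  qed
  then obtain c where "\<forall>t\<in>{0..T}. P t = c"
    using has_field_derivative_zero_constant[of "{0..T}" P] by auto
  then have "P T = P 0" using \<open>0 \<le> T\<close> by simp
  then show ?thesis unfolding P_def by simp
qed

lemma flip_reachable_imp_cos:
  fixes x y T :: real
  assumes xy: "x\<^sup>2 + y\<^sup>2 = 4" and "y \<noteq> 0" "0 \<le> T" and flip: "flip_reachable (x*y/4) T"
  shows "cos (x*T) = -1"
proof -
  obtain J1 J3 K2 Q2 where ode: "flip_ode (x*y/4) {0..T} J1 J3 K2 Q2"
    and "J1 0 = -1" "K2 0 = 0" "J1 T = 1" "J3 T = 0" "K2 T = 0" "Q2 T = 0"
    using flip unfolding flip_reachable_def by blast
  then have "(cos (x*T) + 1) * y\<^sup>2 = 0"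
    using flip_ode_first_integral[OF xy \<open>0 \<le> T\<close> ode] by (simp add: algebra_simps)
  then show ?thesis using \<open>y \<noteq> 0\<close> by simp
qed

lemma sin_eq_0_if_cos_eq_minus1: "cos (\<theta>::real) = -1 \<Longrightarrow> sin \<theta> = 0"
  using sin_cos_squared_add[of \<theta>] by simp

lemma sin_eq_0_if_cos_eq_1: "cos (\<theta>::real) = 1 \<Longrightarrow> sin \<theta> = 0"
  using sin_cos_squared_add[of \<theta>] by simp

lemma flip_reachable_if_cos:
  fixes x y T :: real
  assumes xy: "x\<^sup>2 + y\<^sup>2 = 4" and "x\<^sup>2 \<noteq> y\<^sup>2"
    and cx: "cos (x*T) = -1" and cy: "cos (y*T) = -1"
  shows "flip_reachable (x*y/4) T"
proof -
  \<comment> \<open>\<open>algebra\<close> only exploits hypotheses of the form \<open>p = 0\<close> here\<close>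
  have xy0: "x\<^sup>2 + y\<^sup>2 - 4 = 0" using xy by simp
  \<comment> \<open>superposition of the normal modes of frequencies x and y\<close>
  define c where "c = 1 / (4 * (x\<^sup>2 - y\<^sup>2))"
  define J1 where "J1 t = c * (y^4 * cos (x*t) - x^4 * cos (y*t))" for t
  define J3 where "J3 t = 2*c * (x^3 * sin (y*t) - y^3 * sin (x*t))" for t
  define K2 where "K2 t = c * x\<^sup>2 * y\<^sup>2 * (cos (y*t) - cos (x*t))" for t
  define Q2 where "Q2 t = 2*c * (x * y\<^sup>2 * sin (x*t) - x\<^sup>2 * y * sin (y*t))" for t
  have "flip_ode (x*y/4) UNIV J1 J3 K2 Q2"
    unfolding flip_ode_def J1_def J3_def K2_def Q2_def ball_UNIV
    by (intro allI conjI; (rule derivative_eq_intros refl)+; (algebra | use xy0 in algebra))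
  then have ode: "flip_ode (x*y/4) {0..T} J1 J3 K2 Q2" by (rule flip_ode_subset) simp
  have "c * (y^4 - x^4) = -1" "c * (x^4 - y^4) = 1"
    using \<open>x\<^sup>2 \<noteq> y\<^sup>2\<close> xy0 unfolding c_def by (simp_all add: field_simps) algebra+
  then have "J1 0 = -1" "J3 0 = 0" "K2 0 = 0" "Q2 0 = 0"
      "J1 T = 1" "J3 T = 0" "K2 T = 0" "Q2 T = 0"
    by (simp_all add: J1_def J3_def K2_def Q2_def cx cy
        sin_eq_0_if_cos_eq_minus1[OF cx] sin_eq_0_if_cos_eq_minus1[OF cy])
  with ode show ?thesis unfolding flip_reachable_def by blast
qed

lemma return_reachable_if_cos:
  fixes G a b T :: real
  assumes a: "a\<^sup>2 = 4 + 8*G" and b: "b\<^sup>2 = 4 - 8*G" and "a \<noteq> 0" "b \<noteq> 0"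
    and ca: "cos (a*T) = 1" and cb: "cos (b*T) = 1"
  shows "return_reachable G T"
proof -
  \<comment> \<open>Q1 + K3 and Q1 - K3 oscillate with frequencies a and b; the remaining
      coordinates are integrals of them\<close>
  define Ca where "Ca t = (1 - cos (a*t)) / a\<^sup>2" for t
  define Cb where "Cb t = (1 - cos (b*t)) / b\<^sup>2" for t
  define Sa where "Sa t = sin (a*t) / a" for t
  define Sb where "Sb t = sin (b*t) / b" for t
  have dC: "(Ca has_real_derivative Sa t) (at t)" "(Cb has_real_derivative Sb t) (at t)"
    and dS: "(Sa has_real_derivative 1 - a\<^sup>2 * Ca t) (at t)"
      "(Sb has_real_derivative 1 - b\<^sup>2 * Cb t) (at t)"
    for t
    unfolding Ca_def Cb_def Sa_def Sb_def using \<open>a \<noteq> 0\<close> \<open>b \<noteq> 0\<close>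
    by (auto intro!: derivative_eq_intros simp: field_simps power2_eq_square)
  define J0 where "J0 t = 1 + 2*G\<^sup>2 * (Ca t + Cb t)" for t
  define Q1 where "Q1 t = -G * (Sa t + Sb t)" for t
  define K1 where "K1 t = -2*G * ((1 + G) * Ca t + (1 - G) * Cb t)" for t
  define Q3 where "Q3 t = 2*G * ((1 + G) * Ca t - (1 - G) * Cb t)" for t
  define K3 where "K3 t = -G * (Sa t - Sb t)" for t
  define J2 where "J2 t = 2*G\<^sup>2 * (Ca t - Cb t)" for t
  have a0: "a\<^sup>2 - 4 - 8*G = 0" and b0: "b\<^sup>2 - 4 + 8*G = 0" using a b by simp_all
  have "return_ode G UNIV J0 Q1 K1 Q3 K3 J2"
    unfolding return_ode_def J0_def Q1_def K1_def Q3_def K3_def J2_def ball_UNIV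
    by (intro allI conjI; (rule derivative_eq_intros dC dS refl)+; (algebra | use a0 b0 in algebra))
  then have ode: "return_ode G {0..T} J0 Q1 K1 Q3 K3 J2" by (rule return_ode_subset) simp
  have "Ca 0 = 0" "Cb 0 = 0" "Sa 0 = 0" "Sb 0 = 0" "Ca T = 0" "Cb T = 0" "Sa T = 0" "Sb T = 0"
    by (simp_all add: Ca_def Cb_def Sa_def Sb_def ca cb sin_eq_0_if_cos_eq_1)
  then have "J0 0 = 1" "Q1 0 = 0" "K1 0 = 0" "Q3 0 = 0" "K3 0 = 0" "J2 0 = 0"
      "J0 T = 1" "Q1 T = 0" "K1 T = 0" "Q3 T = 0" "K3 T = 0" "J2 T = 0"
    by (simp_all add: J0_def Q1_def K1_def Q3_def K3_def J2_def)
  with ode show ?thesis unfolding return_reachable_def by blast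
qed

lemma reach_iff_cos:
  fixes x y T :: real
  assumes xy: "x\<^sup>2 + y\<^sup>2 = 4" and "0 < y" "y < x" "0 \<le> T"
  shows "reach (x*y/4) T \<longleftrightarrow> cos (x*T) = -1 \<and> cos (y*T) = -1"
proof
  assume "reach (x*y/4) T"
  then have "flip_reachable (x*y/4) T" "flip_reachable (y*x/4) T"
    by (simp_all add: reach_iff_flip_and_return mult.commute)
  moreover have "y\<^sup>2 + x\<^sup>2 = 4" using xy by simp
  ultimately show "cos (x*T) = -1 \<and> cos (y*T) = -1"
    using flip_reachable_imp_cos[of x y T] flip_reachable_imp_cos[of y x T] xy assms by auto
next
  assume "cos (x*T) = -1 \<and> cos (y*T) = -1"
  then have cx: "cos (x*T) = -1" and cy: "cos (y*T) = -1" by auto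
  have "y\<^sup>2 < x\<^sup>2" using assms by (simp add: power_strict_mono)
  then have "flip_reachable (x*y/4) T" using flip_reachable_if_cos[OF xy _ cx cy] by simp
  moreover have "return_reachable (x*y/4) T"
  proof (rule return_reachable_if_cos)
    show "(x + y)\<^sup>2 = 4 + 8 * (x*y/4)" "(x - y)\<^sup>2 = 4 - 8 * (x*y/4)"
      using xy by (simp_all add: power2_sum power2_diff)
    show "x + y \<noteq> 0" "x - y \<noteq> 0" using assms by auto
    show "cos ((x + y) * T) = 1" "cos ((x - y) * T) = 1"
      by (simp_all add: distrib_right left_diff_distrib cos_add cos_diff cx cy
          sin_eq_0_if_cos_eq_minus1[OF cx] sin_eq_0_if_cos_eq_minus1[OF cy])
  qed
  ultimately show "reach (x*y/4) T" by (simp add: reach_iff_flip_and_return)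
qed

lemma frequency_pair_exists:
  fixes G :: real
  assumes "0 < G" "G < 1/2"
  shows "\<exists>x y. x\<^sup>2 + y\<^sup>2 = 4 \<and> 0 < y \<and> y < x \<and> G = x*y/4"
proof (intro exI conjI)
  define A where "A = sqrt (1 + 2*G)"
  define B where "B = sqrt (1 - 2*G)"
  have A2: "A\<^sup>2 = 1 + 2*G" and B2: "B\<^sup>2 = 1 - 2*G" using assms by (simp_all add: A_def B_def)
  have "0 < B" "B < A" using assms by (simp_all add: A_def B_def)
  then show "0 < A - B" "A - B < A + B" by simp_all
  show "(A + B)\<^sup>2 + (A - B)\<^sup>2 = 4" using A2 B2 by (simp add: power2_sum power2_diff)
  show "G = (A + B) * (A - B) / 4" using A2 B2 by (simp add: algebra_simps power2_eq_square)
qed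

lemma cos_eq_minus1_odd:
  assumes "cos \<theta> = -1"
  shows "\<exists>p::int. odd p \<and> \<theta> = p * pi"
proof -
  obtain n :: int where "\<theta> = (2 * of_int n + 1) * pi" using assms cos_eq_minus1 by blast
  then show ?thesis by (intro exI[of _ "2*n + 1"]) simp
qed

lemma reach_imp_quantized:
  fixes G T :: real
  assumes "0 < G" "G < 1/2" "0 < T" and "reach G T"
  shows "\<exists>p q :: int. odd p \<and> odd q \<and> 0 < q \<and> q < p \<and>
    (2*T)\<^sup>2 = (p\<^sup>2 + q\<^sup>2) * pi\<^sup>2 \<and> G * (p\<^sup>2 + q\<^sup>2) = p * q"
proof -
  obtain x y where xy: "x\<^sup>2 + y\<^sup>2 = 4" and "0 < y" "y < x" and G: "G = x*y/4"
    using frequency_pair_exists assms(1,2) by blast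
  with assms(3,4) have "cos (x*T) = -1" "cos (y*T) = -1"
    using reach_iff_cos[of x y T] by auto
  then obtain p q :: int where "odd p" "odd q" and p: "x*T = p * pi" and q: "y*T = q * pi"
    using cos_eq_minus1_odd by metis
  have "0 < q * pi" "q * pi < p * pi"
    using \<open>0 < y\<close> \<open>y < x\<close> \<open>0 < T\<close> unfolding p[symmetric] q[symmetric] by simp_all
  then have "0 < q" "q < p" by (simp_all add: zero_less_mult_iff)
  have T2: "(2*T)\<^sup>2 = (p\<^sup>2 + q\<^sup>2) * pi\<^sup>2"
  proof -
    have "(2*T)\<^sup>2 = (x\<^sup>2 + y\<^sup>2) * T\<^sup>2" using xy by (simp add: power_mult_distrib)
    also have "\<dots> = (x*T)\<^sup>2 + (y*T)\<^sup>2" by (simp add: algebra_simps power_mult_distrib)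
    finally show ?thesis unfolding p q by (simp add: algebra_simps power_mult_distrib)
  qed
  have "G * (p\<^sup>2 + q\<^sup>2) * pi\<^sup>2 = p * q * pi\<^sup>2"
  proof -
    have "G * (p\<^sup>2 + q\<^sup>2) * pi\<^sup>2 = x*y/4 * (2*T)\<^sup>2" using T2 G by simp
    also have "\<dots> = (x*T) * (y*T)" by (simp add: power2_eq_square)
    finally show ?thesis unfolding p q by (simp add: power2_eq_square)
  qed
  then have "G * (p\<^sup>2 + q\<^sup>2) = p * q" by simp
  with \<open>odd p\<close> \<open>odd q\<close> \<open>0 < q\<close> \<open>q < p\<close> T2 show ?thesis by blast
qed

lemma odd_sum_squares_ge:
  fixes p q n :: int
  assumes "odd p" "odd q" "odd n" "1 \<le> n" "0 < q" "q < p"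
    and less: "p * q * (n\<^sup>2 + 1) < n * (p\<^sup>2 + q\<^sup>2)"
  shows "(n + 2)\<^sup>2 + 1 \<le> p\<^sup>2 + q\<^sup>2"
proof -
  have "0 < n * (p\<^sup>2 + q\<^sup>2) - p * q * (n\<^sup>2 + 1)" using less by simp
  also have "\<dots> = (n*p - q) * (p - n*q)" by (simp add: algebra_simps power2_eq_square)
  finally have "0 < (n*p - q) * (p - n*q)" .
  moreover have "q < n*p" using assms(4-6) mult_right_mono[of 1 n p] by linarith
  ultimately have "n*q < p" by (simp add: zero_less_mult_iff)
  have "n + 2 \<le> p"
  proof (cases "q = 1")
    case True
    with \<open>n*q < p\<close> have "n < p" by simp
    with \<open>odd n\<close> \<open>odd p\<close> show ?thesis by presburger
  next
    case False
    with \<open>odd q\<close> \<open>0 < q\<close> have "3 \<le> q" by presburger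
    with \<open>n*q < p\<close> \<open>1 \<le> n\<close> show ?thesis
      using mult_left_mono[of 3 q n] by linarith
  qed
  then have "(n + 2)\<^sup>2 \<le> p\<^sup>2" using \<open>1 \<le> n\<close> by (simp add: power_mono)
  moreover have "1 \<le> q\<^sup>2" using \<open>0 < q\<close> by (simp add: one_le_power)
  ultimately show ?thesis by simp
qed

lemma reach_time_lower_bound:
  fixes m :: nat and G T :: real
  assumes "odd m" "3 \<le> m" "0 < G" "G < (real m - 2) / ((real m - 2)\<^sup>2 + 1)" "0 < T"
    and "reach G T"
  shows "pi / 2 * sqrt (real m ^ 2 + 1) \<le> T"
proof -
  define n where "n = int m - 2"
  have n: "odd n" "1 \<le> n" "real_of_int n = real m - 2" using assms(1,2) by (auto simp: n_def)
  have pos: "0 < (real_of_int n)\<^sup>2 + 1" by (simp add: add_nonneg_pos)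
  then have Gn: "G * ((real_of_int n)\<^sup>2 + 1) < n"
    using assms(4) n(3) by (simp add: pos_less_divide_eq)
  have "2 * real_of_int n \<le> (real_of_int n)\<^sup>2 + 1"
    using zero_le_power2[of "real_of_int n - 1"] by (simp add: power2_diff)
  with Gn have "G * ((real_of_int n)\<^sup>2 + 1) < 1/2 * ((real_of_int n)\<^sup>2 + 1)" by argo
  then have "G < 1/2" by (rule mult_right_less_imp_less) (use pos in simp)
  then obtain p q :: int where pq: "odd p" "odd q" "0 < q" "q < p"
    and T: "(2*T)\<^sup>2 = (p\<^sup>2 + q\<^sup>2) * pi\<^sup>2" and G: "G * (p\<^sup>2 + q\<^sup>2) = p * q"
    using reach_imp_quantized assms(3,5,6) by blast
  have "0 < (real_of_int p)\<^sup>2 + (real_of_int q)\<^sup>2" using \<open>0 < q\<close> by (simp add: add_nonneg_pos)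
  have "real_of_int (p * q * (n\<^sup>2 + 1))
      = G * ((real_of_int p)\<^sup>2 + (real_of_int q)\<^sup>2) * ((real_of_int n)\<^sup>2 + 1)"
    using G by simp
  also have "\<dots> = G * ((real_of_int n)\<^sup>2 + 1) * ((real_of_int p)\<^sup>2 + (real_of_int q)\<^sup>2)"
    by (simp only: ac_simps)
  also have "\<dots> < n * ((real_of_int p)\<^sup>2 + (real_of_int q)\<^sup>2)"
    by (rule mult_strict_right_mono) fact+
  finally have "real_of_int (p * q * (n\<^sup>2 + 1)) < real_of_int (n * (p\<^sup>2 + q\<^sup>2))" by simp
  then have "p * q * (n\<^sup>2 + 1) < n * (p\<^sup>2 + q\<^sup>2)" by linarith
  from odd_sum_squares_ge[OF pq(1,2) n(1,2) pq(3,4) this]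
  have "real_of_int (int m ^ 2 + 1) \<le> real_of_int (p\<^sup>2 + q\<^sup>2)"
    using assms(2) unfolding n_def of_int_le_iff by simp
  then have "real m ^ 2 + 1 \<le> p\<^sup>2 + q\<^sup>2" by simp
  then have "(pi * sqrt (real m ^ 2 + 1))\<^sup>2 \<le> (2*T)\<^sup>2"
    using T by (simp add: power_mult_distrib mult_right_mono)
  then have "pi * sqrt (real m ^ 2 + 1) \<le> 2*T"
    by (rule power2_le_imp_le) (use \<open>0 < T\<close> in simp)
  then show ?thesis by simp
qed

lemma reach_optimal:
  fixes m :: nat
  assumes "odd m" "1 < m"
  shows "reach (real m / (real m ^ 2 + 1)) (pi / 2 * sqrt (real m ^ 2 + 1))"
proof -
  define s where "s = sqrt (real m ^ 2 + 1)"
  have "0 < s" and s2: "s\<^sup>2 = real m ^ 2 + 1" by (simp_all add: s_def add_nonneg_pos)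
  define x y where "x = 2 * real m / s" and "y = 2 / s"
  have "x\<^sup>2 + y\<^sup>2 = 4 * (real m ^ 2 + 1) / s\<^sup>2"
    by (simp add: x_def y_def power_divide power_mult_distrib add_divide_distrib)
  also have "\<dots> = 4" using \<open>0 < s\<close> by (simp add: s2[symmetric])
  finally have xy: "x\<^sup>2 + y\<^sup>2 = 4" .
  have "0 < y" "y < x"
    using \<open>0 < s\<close> \<open>1 < m\<close> by (simp_all add: x_def y_def divide_strict_right_mono)
  moreover have "cos (x * (pi/2 * s)) = -1" "cos (y * (pi/2 * s)) = -1"
    using \<open>0 < s\<close> \<open>odd m\<close> by (simp_all add: x_def y_def cos_npi)
  ultimately have "reach (x * y / 4) (pi/2 * s)"
    using reach_iff_cos[OF xy] \<open>0 < s\<close> by simp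
  moreover have "x * y / 4 = real m / s\<^sup>2" by (simp add: x_def y_def power2_eq_square)
  ultimately show ?thesis by (simp add: s2 s_def[symmetric])
qed

text \<open>The hypothesis \<open>real m / (real m ^ 2 + 1) \<le> G0\<close> only makes the optimal control
  admissible; neither conjunct needs it.\<close>

theorem corollary1:
  fixes m :: nat and G0 :: real
  assumes "odd m" and "m \<ge> 3"
    and "real m / (real m ^ 2 + 1) \<le> G0"
    and "G0 < (real m - 2) / ((real m - 2) ^ 2 + 1)"
  shows "(\<forall>T G. T > 0 \<and> 0 < G \<and> G \<le> G0 \<and> reach G T \<longrightarrow> pi / 2 * sqrt (real m ^ 2 + 1) \<le> T)
         \<and> reach (real m / (real m ^ 2 + 1)) (pi / 2 * sqrt (real m ^ 2 + 1))"
proof (intro conjI allI impI)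
  fix T G assume "T > 0 \<and> 0 < G \<and> G \<le> G0 \<and> reach G T"
  with assms show "pi / 2 * sqrt (real m ^ 2 + 1) \<le> T"
    using reach_time_lower_bound[of m G T] by auto
next
  show "reach (real m / (real m ^ 2 + 1)) (pi / 2 * sqrt (real m ^ 2 + 1))"
    using reach_optimal assms(1,2) by simp
qed

end
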